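(* Consider the space--time hybridized discontinuous Galerkin discretization described in the context, on a space--time slab $\mathcal{E}^n$ with polynomial degree $k\ge 1$. Let $\boldsymbol{w}_h^\star=(\boldsymbol{w}_h,\bar{\boldsymbol{w}}_h)\in \boldsymbol{V}_h^{n,\star}$ be given, let $\boldsymbol{f}$, $\boldsymbol{g}$ and $\boldsymbol{u}_h^-$ be given data, and suppose $(\boldsymbol{u}_h^\star,p_h^\star)=((\boldsymbol{u}_h,\bar{\boldsymbol{u}}_h),(p_h,\bar p_h))\in \boldsymbol{V}_h^{n,\star}\times Q_h^{n,\star}$ satisfies $$ t_h^n(\boldsymbol{u}_h^{\star}, \boldsymbol{w}_h^{\star}, \boldsymbol{v}_h^{\star}) + a_h^n(\boldsymbol{u}_h^{\star}, \boldsymbol{v}_h^{\star}) + b_h^n(p_h^{\star}, \boldsymbol{v}_h^{\star}) - b_h^n(q_h^{\star}, \boldsymbol{u}_h^{\star}) = \sum_{\mathcal{K}\in\mathcal{T}^n} \int_{\mathcal{K}} \boldsymbol{f} \cdot \boldsymbol{v}_h \,d\boldsymbol{x}\, dt - \sum_{\mathcal{S}\in\mathcal{F}^n_N}\int_{\mathcal{S}} \boldsymbol{g} \cdot \bar{\boldsymbol{v}}_h \,ds + \int_{\Omega^n}\boldsymbol{u}_h^- \cdot \boldsymbol{v}_h \,d\boldsymbol{x} $$ for all $(\boldsymbol{v}_h^\star,q_h^\star)\in \boldsymbol{V}_h^{n,\star}\times Q_h^{n,\star}$. Then $\nabla\cdot\boldsymbol{u}_h=0$ pointwise in every space--time cell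 $\mathcal{K}\in\mathcal{T}^n$, $\boldsymbol{u}_h\cdot\boldsymbol{n}$ is single-valued on every interior facet $\mathcal{S}\in\mathcal{F}^n_I$ (i.e. $\boldsymbol{u}_h$ is $H(\mathrm{div})$-conforming), and $\boldsymbol{u}_h\cdot\boldsymbol{n}=\bar{\boldsymbol{u}}_h\cdot\boldsymbol{n}$ on every boundary facet $\mathcal{S}\in\mathcal{F}^n_B$.
   Context: Let $\Omega(t)\subset\mathbb{R}^d$ ($d=2,3$) be a time-dependent polygonal/polyhedral domain, $0=t^0<\dots<t^N=T$, and the space--time slab $\mathcal{E}^n=\{(t,\boldsymbol{x}):t\in(t^n,t^{n+1}),\boldsymbol{x}\in\Omega(t)\}$, with $\Omega^n=\Omega(t^n)$. The space--time boundary $\partial\mathcal{E}$ (apart from the initial and final time slices) is split into a Dirichlet part $\partial\mathcal{E}^D$ and a Neumann part $\partial\mathcal{E}^N$. The slab is triangulated by a conforming mesh $\mathcal{T}^n$ of $(d+1)$-dimensional space--time simplices $\mathcal{K}$ (of size $h_{\mathcal{K}}$), with outward space--time unit normal $(n_t,\boldsymbol{n})$, $n_t\in\mathbb{R}$, $\boldsymbol{n}\in\mathbb{R}^d$. Facets of $\partial\mathcal{K}$ with $n_t=-1$ (resp. $n_t=1$) are denoted $K^n$ (resp. $K^{n+1}$) and lie in $\Omega^n$ (resp. $\Omega^{n+1}$); $\mathcal{Q}_{\mathcal{K}}=\partial\mathcal{K}\setminus(K^n\cup K^{n+1})$. $\mathcal{F}^n$ is the set of facets with $|n_t|\neq1$,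 split into interior facets $\mathcal{F}^n_I$ and boundary facets $\mathcal{F}^n_B$; $\mathcal{F}^n_N$ are the facets on $\partial\mathcal{E}^N$. Throughout, $\nabla$, $\nabla\cdot$ denote spatial gradient/divergence and $\partial\boldsymbol{v}/\partial\boldsymbol{n}=(\nabla\boldsymbol{v})\boldsymbol{n}$. Spaces: $\boldsymbol{V}_h^n$ = discontinuous $[P_k(\mathcal{K})]^d$ functions on $\mathcal{T}^n$; $Q_h^n$ = discontinuous $P_{k-1}(\mathcal{K})$ functions; $\bar{\boldsymbol{V}}_h^n$ = $[P_k(\mathcal{S})]^d$ functions on each facet of $\mathcal{F}^n$ (single-valued on facets), vanishing on $\partial\mathcal{E}^D$; $\bar Q_h^n$ = $P_k(\mathcal{S})$ functions on facets of $\mathcal{F}^n$; $\boldsymbol{V}_h^{n,\star}=\boldsymbol{V}_h^n\times\bar{\boldsymbol{V}}_h^n$, $Q_h^{n,\star}=Q_h^n\times\bar Q_h^n$. With $\nu>0$ and penalty $\alpha>0$: $a_h^n(\boldsymbol{u}^\star,\boldsymbol{v}^\star)=\sum_{\mathcal{K}}\int_{\mathcal{K}}\nu\nabla\boldsymbol{u}:\nabla\boldsymbol{v}+\sum_{\mathcal{K}}\int_{\mathcal{Q}_{\mathcal{K}}}\frac{\nu\alpha}{h_{\mathcal{K}}}(\boldsymbol{u}-\bar{\boldsymbol{u}})\cdot(\boldsymbol{v}-\bar{\boldsymbol{v}})-\sum_{\mathcal{K}}\int_{\mathcal{Q}_{\mathcal{K}}}\nu[(\boldsymbol{u}-\bar{\boldsymbol{u}})\cdot\frac{\partial\boldsymbol{v}}{\partial\boldsymbol{n}}+\frac{\partial\boldsymbol{u}}{\partial\boldsymbol{n}}\cdot(\boldsymbol{v}-\bar{\boldsymbol{v}})]$;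 $b_h^n(p^\star,\boldsymbol{v}^\star)=-\sum_{\mathcal{K}}\int_{\mathcal{K}}p\,\nabla\cdot\boldsymbol{v}+\sum_{\mathcal{K}}\int_{\mathcal{Q}_{\mathcal{K}}}(\boldsymbol{v}-\bar{\boldsymbol{v}})\cdot\boldsymbol{n}\,\bar p$; $t_h^n(\boldsymbol{u}^\star,\boldsymbol{w}^\star,\boldsymbol{v}^\star)=-\sum_{\mathcal{K}}\int_{\mathcal{K}}(\boldsymbol{u}\cdot\partial_t\boldsymbol{v}+\boldsymbol{u}\otimes\boldsymbol{w}:\nabla\boldsymbol{v})+\sum_{\mathcal{K}}\int_{K^{n+1}}\boldsymbol{u}\cdot\boldsymbol{v}+\sum_{\mathcal{K}}\int_{\mathcal{Q}_{\mathcal{K}}}(n_t+\boldsymbol{w}\cdot\boldsymbol{n})(\boldsymbol{u}+\lambda(\bar{\boldsymbol{u}}-\boldsymbol{u}))\cdot(\boldsymbol{v}-\bar{\boldsymbol{v}})+\int_{\partial\mathcal{E}^+}(n_t+\bar{\boldsymbol{w}}\cdot\boldsymbol{n})\bar{\boldsymbol{u}}\cdot\bar{\boldsymbol{v}}$, where $\lambda=1$ if $n_t+\boldsymbol{w}\cdot\boldsymbol{n}<0$ and $\lambda=0$ otherwise, and $\partial\mathcal{E}^+$ is the part of $\partial\mathcal{E}^N\cap\partial\mathcal{E}^n$ where $n_t+\bar{\boldsymbol{w}}\cdot\boldsymbol{n}\ge0$. On an interior facet, $\bar{\boldsymbol{u}}_h$ is single-valued while $\boldsymbol{u}_h$ has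 traces from both sides; the jump is $[\![\boldsymbol{u}_h\cdot\boldsymbol{n}]\!]=\boldsymbol{u}_h^l\cdot\boldsymbol{n}^l+\boldsymbol{u}_h^r\cdot\boldsymbol{n}^r$. *)

theory Defs
  imports "HOL-Analysis.Analysis"
begin

text \<open>Space-time points are pairs (t, x) with t :: real and x :: real^'d (spatial dimension
  CARD('d)). Broken (discontinuous) finite element functions are
  represented as families indexed by the cell K (a set of space-time points), facet functions as
  families indexed by the facet S. Each member is a global polynomial; only its restriction to
  K (resp. S) enters the forms.\<close>

type_synonym 'd stpt = "real \<times> (real^'d)"

definition poly_fun :: "nat \<Rightarrow> ('d::finite stpt \<Rightarrow> real) \<Rightarrow> bool" where
  "poly_fun k f \<longleftrightarrow> (\<exists>c :: nat \<Rightarrow> ('d \<Rightarrow> nat) \<Rightarrow> real.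
     \<forall>z. f z = (\<Sum>(j,a)\<in>{(j, a :: 'd \<Rightarrow> nat). j + sum a UNIV \<le> k}.
                  c j a * fst z ^ j * (\<Prod>i\<in>UNIV. (snd z $ i) ^ a i)))"

definition vpoly_fun :: "nat \<Rightarrow> ('d::finite stpt \<Rightarrow> real^'d) \<Rightarrow> bool" where
  "vpoly_fun k u \<longleftrightarrow> (\<forall>i. poly_fun k (\<lambda>z. u z $ i))"

definition pdx :: "'d::finite \<Rightarrow> ('d stpt \<Rightarrow> real) \<Rightarrow> 'd stpt \<Rightarrow> real" where
  "pdx j f z = deriv (\<lambda>s. f (fst z, snd z + s *\<^sub>R axis j 1)) 0"

definition pdt :: "('d::finite stpt \<Rightarrow> real) \<Rightarrow> 'd stpt \<Rightarrow> real" where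
  "pdt f z = deriv (\<lambda>s. f (fst z + s, snd z)) 0"

definition sdiv :: "('d::finite stpt \<Rightarrow> real^'d) \<Rightarrow> 'd stpt \<Rightarrow> real" where
  "sdiv u z = (\<Sum>i\<in>UNIV. pdx i (\<lambda>y. u y $ i) z)"

definition grad_inner :: "('d::finite stpt \<Rightarrow> real^'d) \<Rightarrow> ('d stpt \<Rightarrow> real^'d) \<Rightarrow> 'd stpt \<Rightarrow> real" where
  "grad_inner u v z = (\<Sum>i\<in>UNIV. \<Sum>j\<in>UNIV. pdx j (\<lambda>y. u y $ i) z * pdx j (\<lambda>y. v y $ i) z)"

definition dnormal :: "('d::finite stpt \<Rightarrow> real^'d) \<Rightarrow> real^'d \<Rightarrow> 'd stpt \<Rightarrow> real^'d" where
  "dnormal u n z = (\<chi> i. \<Sum>j\<in>UNIV. pdx j (\<lambda>y. u y $ i) z * n $ j)"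

definition dtime :: "('d::finite stpt \<Rightarrow> real^'d) \<Rightarrow> 'd stpt \<Rightarrow> real^'d" where
  "dtime v z = (\<chi> i. pdt (\<lambda>y. v y $ i) z)"

definition conv_term :: "('d::finite stpt \<Rightarrow> real^'d) \<Rightarrow> ('d stpt \<Rightarrow> real^'d) \<Rightarrow> ('d stpt \<Rightarrow> real^'d) \<Rightarrow> 'd stpt \<Rightarrow> real" where
  "conv_term u w v z = (\<Sum>i\<in>UNIV. \<Sum>j\<in>UNIV. u z $ i * w z $ j * pdx j (\<lambda>y. v y $ i) z)"

definition verts :: "'d::finite stpt set \<Rightarrow> 'd stpt set" where
  "verts K = {x. x extreme_point_of K}"

definition st_simplex :: "'d::finite stpt set \<Rightarrow> bool" where
  "st_simplex K \<longleftrightarrow> (\<exists>V. finite V \<and> card V = CARD('d) + 2 \<and> \<not> affine_dependent V \<and> K = convex hull V)"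

definition facets :: "'d::finite stpt set \<Rightarrow> 'd stpt set set" where
  "facets K = {convex hull (verts K - {v}) | v. v \<in> verts K}"

definition onormal :: "'d::finite stpt set \<Rightarrow> 'd stpt set \<Rightarrow> 'd stpt" where
  "onormal K S = (THE \<nu>. norm \<nu> = 1 \<and> (\<forall>y\<in>K. \<forall>p\<in>S. \<nu> \<bullet> (y - p) \<le> 0))"

definition nt :: "'d::finite stpt set \<Rightarrow> 'd stpt set \<Rightarrow> real" where
  "nt K S = fst (onormal K S)"

definition nx :: "'d::finite stpt set \<Rightarrow> 'd stpt set \<Rightarrow> real^'d" where
  "nx K S = snd (onormal K S)"

text \<open>Surface integral over a flat d-simplex S in R^(d+1) (d-dimensional Hausdorff measure),
  via an affine parametrisation over the reference simplex with Gram determinant factor.\<close>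
definition fint :: "'d::finite stpt set \<Rightarrow> ('d stpt \<Rightarrow> real) \<Rightarrow> real" where
  "fint S f = (let W = verts S;
                   p0 = (SOME p. p \<in> W);
                   e = (SOME e :: 'd \<Rightarrow> 'd stpt. bij_betw e UNIV (W - {p0}));
                   \<phi> = (\<lambda>y :: real^'d. p0 + (\<Sum>i\<in>UNIV. (y $ i) *\<^sub>R (e i - p0)));
                   G = (\<chi> i j. (e i - p0) \<bullet> (e j - p0)) :: real^'d^'d
               in sqrt (det G) *
                  integral {y :: real^'d. (\<forall>i. 0 \<le> y $ i) \<and> (\<Sum>i\<in>UNIV. y $ i) \<le> 1} (\<lambda>y. f (\<phi> y)))"

definition Qfacets :: "'d::finite stpt set \<Rightarrow> 'd stpt set set" where
  "Qfacets K = {S \<in> facets K. \<bar>nt K S\<bar> \<noteq> 1}"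

definition bot_facets :: "'d::finite stpt set \<Rightarrow> 'd stpt set set" where
  "bot_facets K = {S \<in> facets K. nt K S = -1}"

definition top_facets :: "'d::finite stpt set \<Rightarrow> 'd stpt set set" where
  "top_facets K = {S \<in> facets K. nt K S = 1}"

definition cells_of :: "'d::finite stpt set set \<Rightarrow> 'd stpt set \<Rightarrow> 'd stpt set set" where
  "cells_of T S = {K \<in> T. S \<in> facets K}"

definition Fn :: "'d::finite stpt set set \<Rightarrow> 'd stpt set set" where
  "Fn T = (\<Union>K\<in>T. Qfacets K)"

definition FI :: "'d::finite stpt set set \<Rightarrow> 'd stpt set set" where
  "FI T = {S \<in> Fn T. card (cells_of T S) = 2}"

definition FB :: "'d::finite stpt set set \<Rightarrow> 'd stpt set set" where
  "FB T = {S \<in> Fn T. card (cells_of T S) = 1}"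

definition st_mesh :: "'d::finite stpt set set \<Rightarrow> real \<Rightarrow> real \<Rightarrow> bool" where
  "st_mesh T tn tn1 \<longleftrightarrow> finite T \<and> T \<noteq> {} \<and> tn < tn1 \<and>
     (\<forall>K\<in>T. st_simplex K) \<and>
     (\<forall>K\<in>T. \<forall>K'\<in>T. K \<noteq> K' \<longrightarrow> K \<inter> K' = convex hull (verts K \<inter> verts K')) \<and>
     (\<forall>K\<in>T. \<forall>z\<in>K. tn \<le> fst z \<and> fst z \<le> tn1) \<and>
     (\<forall>K\<in>T. \<forall>S\<in>bot_facets K. \<forall>z\<in>S. fst z = tn) \<and>
     (\<forall>K\<in>T. \<forall>S\<in>top_facets K. \<forall>z\<in>S. fst z = tn1)"

definition Vstar :: "nat \<Rightarrow> 'd::finite stpt set set \<Rightarrow> 'd stpt set set \<Rightarrow>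
    ('d stpt set \<Rightarrow> 'd stpt \<Rightarrow> real^'d) \<Rightarrow> ('d stpt set \<Rightarrow> 'd stpt \<Rightarrow> real^'d) \<Rightarrow> bool" where
  "Vstar k T FD v vb \<longleftrightarrow> (\<forall>K\<in>T. vpoly_fun k (v K)) \<and> (\<forall>S\<in>Fn T. vpoly_fun k (vb S)) \<and>
     (\<forall>S\<in>FD. \<forall>z\<in>S. vb S z = 0)"

definition Qstar :: "nat \<Rightarrow> 'd::finite stpt set set \<Rightarrow>
    ('d stpt set \<Rightarrow> 'd stpt \<Rightarrow> real) \<Rightarrow> ('d stpt set \<Rightarrow> 'd stpt \<Rightarrow> real) \<Rightarrow> bool" where
  "Qstar k T q qb \<longleftrightarrow> (\<forall>K\<in>T. poly_fun (k - 1) (q K)) \<and> (\<forall>S\<in>Fn T. poly_fun k (qb S))"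

definition a_form :: "'d::finite stpt set set \<Rightarrow> real \<Rightarrow> real \<Rightarrow>
    ('d stpt set \<Rightarrow> 'd stpt \<Rightarrow> real^'d) \<Rightarrow> ('d stpt set \<Rightarrow> 'd stpt \<Rightarrow> real^'d) \<Rightarrow>
    ('d stpt set \<Rightarrow> 'd stpt \<Rightarrow> real^'d) \<Rightarrow> ('d stpt set \<Rightarrow> 'd stpt \<Rightarrow> real^'d) \<Rightarrow> real" where
  "a_form T nu alpha u ub v vb =
     (\<Sum>K\<in>T. integral K (\<lambda>z. nu * grad_inner (u K) (v K) z))
   + (\<Sum>K\<in>T. \<Sum>S\<in>Qfacets K. fint S (\<lambda>z. nu * alpha / diameter K * ((u K z - ub S z) \<bullet> (v K z - vb S z))))
   - (\<Sum>K\<in>T. \<Sum>S\<in>Qfacets K. fint S (\<lambda>z. nu * ((u K z - ub S z) \<bullet> dnormal (v K) (nx K S) z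
                                                 + dnormal (u K) (nx K S) z \<bullet> (v K z - vb S z))))"

definition b_form :: "'d::finite stpt set set \<Rightarrow>
    ('d stpt set \<Rightarrow> 'd stpt \<Rightarrow> real) \<Rightarrow> ('d stpt set \<Rightarrow> 'd stpt \<Rightarrow> real) \<Rightarrow>
    ('d stpt set \<Rightarrow> 'd stpt \<Rightarrow> real^'d) \<Rightarrow> ('d stpt set \<Rightarrow> 'd stpt \<Rightarrow> real^'d) \<Rightarrow> real" where
  "b_form T p pb v vb =
     - (\<Sum>K\<in>T. integral K (\<lambda>z. p K z * sdiv (v K) z))
   + (\<Sum>K\<in>T. \<Sum>S\<in>Qfacets K. fint S (\<lambda>z. ((v K z - vb S z) \<bullet> nx K S) * pb S z))"

definition upw :: "real \<Rightarrow> real" where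
  "upw \<beta> = (if \<beta> < 0 then 1 else 0)"

definition t_form :: "'d::finite stpt set set \<Rightarrow> 'd stpt set set \<Rightarrow>
    ('d stpt set \<Rightarrow> 'd stpt \<Rightarrow> real^'d) \<Rightarrow> ('d stpt set \<Rightarrow> 'd stpt \<Rightarrow> real^'d) \<Rightarrow>
    ('d stpt set \<Rightarrow> 'd stpt \<Rightarrow> real^'d) \<Rightarrow> ('d stpt set \<Rightarrow> 'd stpt \<Rightarrow> real^'d) \<Rightarrow>
    ('d stpt set \<Rightarrow> 'd stpt \<Rightarrow> real^'d) \<Rightarrow> ('d stpt set \<Rightarrow> 'd stpt \<Rightarrow> real^'d) \<Rightarrow> real" where
  "t_form T FN u ub w wb v vb =
     - (\<Sum>K\<in>T. integral K (\<lambda>z. u K z \<bullet> dtime (v K) z + conv_term (u K) (w K) (v K) z))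
   + (\<Sum>K\<in>T. \<Sum>S\<in>top_facets K. fint S (\<lambda>z. u K z \<bullet> v K z))
   + (\<Sum>K\<in>T. \<Sum>S\<in>Qfacets K. fint S (\<lambda>z.
        (nt K S + w K z \<bullet> nx K S) *
        ((u K z + upw (nt K S + w K z \<bullet> nx K S) *\<^sub>R (ub S z - u K z)) \<bullet> (v K z - vb S z))))
   + (\<Sum>S\<in>FN. \<Sum>K\<in>cells_of T S. fint S (\<lambda>z.
        if nt K S + wb S z \<bullet> nx K S \<ge> 0
        then (nt K S + wb S z \<bullet> nx K S) * (ub S z \<bullet> vb S z) else 0))"

text \<open>right-hand side; the integral over Omega^n is the sum over the bottom facets K^n\<close>
definition rhs_form :: "'d::finite stpt set set \<Rightarrow> 'd stpt set set \<Rightarrow>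
    ('d stpt \<Rightarrow> real^'d) \<Rightarrow> ('d stpt \<Rightarrow> real^'d) \<Rightarrow> ('d stpt \<Rightarrow> real^'d) \<Rightarrow>
    ('d stpt set \<Rightarrow> 'd stpt \<Rightarrow> real^'d) \<Rightarrow> ('d stpt set \<Rightarrow> 'd stpt \<Rightarrow> real^'d) \<Rightarrow> real" where
  "rhs_form T FN f g um v vb =
     (\<Sum>K\<in>T. integral K (\<lambda>z. f z \<bullet> v K z))
   - (\<Sum>S\<in>FN. fint S (\<lambda>z. g z \<bullet> vb S z))
   + (\<Sum>K\<in>T. \<Sum>S\<in>bot_facets K. fint S (\<lambda>z. um z \<bullet> v K z))"

end

theory Submission
  imports Defs
begin

(* Testing the discrete equation with the velocity test pair set to zero leaves
   b_h(q_h, u_h) = 0 for every pressure pair q_h in Q_h.  The divergence of u_h has degree k - 1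
   on each cell, and the normal jumps of u_h have degree k on each facet, so they are admissible
   pressures: taking q = div u_h on a single cell gives the integral of (div u_h)^2 over that
   cell, and taking qbar = (u_h - ubar_h).n on a boundary facet, or qbar = u_h^l.n^l + u_h^r.n^r
   on an interior facet (where the outward normals of the two neighbours are opposite, so
   ubar_h cancels), gives the integral of its square over the facet.  A continuous nonnegative
   function with zero integral over a nondegenerate simplex vanishes on it. *)

section \<open>Polynomials in space-time\<close>

definition st_monomial :: "nat \<Rightarrow> ('d::finite \<Rightarrow> nat) \<Rightarrow> 'd stpt \<Rightarrow> real" where
  "st_monomial j a z = fst z ^ j * (\<Prod>i\<in>UNIV. (snd z $ i) ^ a i)"

definition exps_upto :: "nat \<Rightarrow> (nat \<times> ('d::finite \<Rightarrow> nat)) set" where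
  "exps_upto k = {(j, a). j + sum a UNIV \<le> k}"

lemma finite_exps_upto: "finite (exps_upto k :: (nat \<times> ('d::finite \<Rightarrow> nat)) set)"
proof (rule finite_subset)
  show "exps_upto k \<subseteq> {..k} \<times> (UNIV \<rightarrow>\<^sub>E {..k})"
  proof
    fix x assume "x \<in> exps_upto k"
    then obtain j a where x: "x = (j, a)" "j + sum a UNIV \<le> k" by (auto simp: exps_upto_def)
    then have "a i \<le> k" for i using member_le_sum[of i UNIV a] by simp
    with x show "x \<in> {..k} \<times> (UNIV \<rightarrow>\<^sub>E {..k})" by auto
  qed
qed (intro finite_cartesian_product finite_PiE; simp)

lemma poly_fun_iff_monomial_sum:
  "poly_fun k f \<longleftrightarrow> (\<exists>c. \<forall>z. f z = (\<Sum>(j, a)\<in>exps_upto k. c j a * st_monomial j a z))"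
  unfolding poly_fun_def exps_upto_def st_monomial_def by (simp add: mult.assoc)

lemma poly_fun_st_monomial:
  assumes "j + sum a UNIV \<le> k"
  shows "poly_fun k (st_monomial j a)"
  unfolding poly_fun_iff_monomial_sum
proof (intro exI allI)
  fix z
  have "(\<Sum>(j', a')\<in>exps_upto k. (if (j', a') = (j, a) then 1 else 0) * st_monomial j' a' z)
      = (\<Sum>x\<in>exps_upto k. if x = (j, a) then st_monomial j a z else 0)"
    by (rule sum.cong) (auto split: if_splits)
  also have "\<dots> = st_monomial j a z"
    using assms by (subst sum.delta[OF finite_exps_upto]) (simp add: exps_upto_def)
  finally show "st_monomial j a z
      = (\<Sum>(j', a')\<in>exps_upto k. (if (j', a') = (j, a) then 1 else 0) * st_monomial j' a' z)"
    by (rule sym)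
qed

lemma poly_fun_0: "poly_fun k (\<lambda>z. 0)"
  unfolding poly_fun_iff_monomial_sum by (intro exI[of _ "\<lambda>_ _. 0"]) simp

lemma poly_fun_add:
  assumes "poly_fun k f" "poly_fun k g"
  shows "poly_fun k (\<lambda>z. f z + g z)"
proof -
  obtain c where c: "\<And>z. f z = (\<Sum>(j, a)\<in>exps_upto k. c j a * st_monomial j a z)"
    using assms(1) poly_fun_iff_monomial_sum by blast
  obtain c' where c': "\<And>z. g z = (\<Sum>(j, a)\<in>exps_upto k. c' j a * st_monomial j a z)"
    using assms(2) poly_fun_iff_monomial_sum by blast
  have "f z + g z = (\<Sum>(j, a)\<in>exps_upto k. (c j a + c' j a) * st_monomial j a z)" for z
    unfolding c c' by (simp add: sum.distrib[symmetric] case_prod_beta distrib_right)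
  then show ?thesis
    unfolding poly_fun_iff_monomial_sum by (intro exI[of _ "\<lambda>j a. c j a + c' j a"]) simp
qed

lemma poly_fun_cmult:
  assumes "poly_fun k f"
  shows "poly_fun k (\<lambda>z. r * f z)"
proof -
  obtain c where c: "\<And>z. f z = (\<Sum>(j, a)\<in>exps_upto k. c j a * st_monomial j a z)"
    using assms poly_fun_iff_monomial_sum by blast
  have "r * f z = (\<Sum>(j, a)\<in>exps_upto k. (r * c j a) * st_monomial j a z)" for z
    unfolding c by (simp add: sum_distrib_left case_prod_beta mult.assoc)
  then show ?thesis
    unfolding poly_fun_iff_monomial_sum by (intro exI[of _ "\<lambda>j a. r * c j a"]) simp
qed

lemma poly_fun_sum:
  assumes "finite I" "\<And>i. i \<in> I \<Longrightarrow> poly_fun k (F i)"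
  shows "poly_fun k (\<lambda>z. \<Sum>i\<in>I. F i z)"
  using assms by (induction I rule: finite_induct) (simp_all add: poly_fun_0 poly_fun_add)

lemma poly_fun_inner:
  assumes "vpoly_fun k u"
  shows "poly_fun k (\<lambda>z. u z \<bullet> n)"
proof -
  have "poly_fun k (\<lambda>z. \<Sum>i\<in>UNIV. n $ i * u z $ i)"
    using assms by (intro poly_fun_sum poly_fun_cmult) (auto simp: vpoly_fun_def)
  then show ?thesis by (simp add: inner_vec_def mult.commute)
qed

lemma vpoly_fun_diff:
  assumes "vpoly_fun k u" "vpoly_fun k v"
  shows "vpoly_fun k (\<lambda>z. u z - v z)"
proof -
  have "poly_fun k (\<lambda>z. u z $ i + (-1) * v z $ i)" for i
    using assms unfolding vpoly_fun_def by (intro poly_fun_add poly_fun_cmult) auto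
  then show ?thesis by (simp add: vpoly_fun_def)
qed

lemma continuous_on_poly_fun:
  assumes "poly_fun k f"
  shows "continuous_on A f"
proof -
  obtain c where "f = (\<lambda>z. \<Sum>(j, a)\<in>exps_upto k. c j a * st_monomial j a z)"
    using assms unfolding poly_fun_iff_monomial_sum by blast
  then show ?thesis
    unfolding st_monomial_def case_prod_unfold by (simp add: continuous_intros)
qed

lemma sum_fun_upd_decr:
  fixes a :: "'d::finite \<Rightarrow> nat"
  assumes "a m \<noteq> 0"
  shows "sum (a(m := a m - 1)) UNIV + 1 = sum a UNIV"
proof -
  have "sum (a(m := a m - 1)) UNIV = (a m - 1) + sum a (UNIV - {m})"
    by (simp add: sum.remove[of _ m])
  moreover have "sum a UNIV = a m + sum a (UNIV - {m})"
    by (simp add: sum.remove[of _ m])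
  ultimately show ?thesis using assms by simp
qed

lemma st_monomial_has_derivative_axis:
  "((\<lambda>s. st_monomial j a (fst z, snd z + s *\<^sub>R axis m 1)) has_field_derivative
     real (a m) * st_monomial j (a(m := a m - 1)) z) (at 0)"
proof -
  define rest where "rest = (\<Prod>i\<in>UNIV - {m}. (snd z $ i) ^ a i)"
  have split: "st_monomial j b (fst z, x)
      = fst z ^ j * (x $ m ^ b m * (\<Prod>i\<in>UNIV - {m}. (x $ i) ^ b i))" for b x
    unfolding st_monomial_def by (simp add: prod.remove[of _ m])
  have "(\<Prod>i\<in>UNIV - {m}. ((snd z + s *\<^sub>R axis m 1) $ i) ^ a i) = rest" for s
    unfolding rest_def by (rule prod.cong) (auto simp: axis_def)
  then have shifted: "st_monomial j a (fst z, snd z + s *\<^sub>R axis m 1)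
      = fst z ^ j * ((snd z $ m + s) ^ a m * rest)" for s
    using split[of a "snd z + s *\<^sub>R axis m 1"] by (simp add: axis_def)
  have "(\<Prod>i\<in>UNIV - {m}. (snd z $ i) ^ (a(m := a m - 1)) i) = rest"
    unfolding rest_def by (rule prod.cong) auto
  then have lowered:
      "st_monomial j (a(m := a m - 1)) z = fst z ^ j * ((snd z $ m) ^ (a m - 1) * rest)"
    using split[of "a(m := a m - 1)" "snd z"] by simp
  have "((\<lambda>s. fst z ^ j * ((snd z $ m + s) ^ a m * rest)) has_field_derivative
      fst z ^ j * (real (a m) * (snd z $ m) ^ (a m - 1) * rest)) (at 0)"
    by (auto intro!: derivative_eq_intros)
  then show ?thesis
    unfolding shifted lowered by (simp add: mult_ac)
qed

lemma poly_fun_pdx: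
  assumes "poly_fun k f"
  shows "poly_fun (k - 1) (pdx m f)"
proof -
  obtain c where c: "\<And>z. f z = (\<Sum>(j, a)\<in>exps_upto k. c j a * st_monomial j a z)"
    using assms poly_fun_iff_monomial_sum by blast
  define D where
    "D x z = c (fst x) (snd x) *
      (real (snd x m) * st_monomial (fst x) ((snd x)(m := snd x m - 1)) z)"
    for x z
  have "pdx m f = (\<lambda>z. \<Sum>x\<in>exps_upto k. D x z)"
  proof
    fix z
    have "((\<lambda>s. f (fst z, snd z + s *\<^sub>R axis m 1)) has_field_derivative
        (\<Sum>x\<in>exps_upto k. D x z)) (at 0)"
      unfolding c D_def case_prod_beta
      by (intro DERIV_sum DERIV_cmult st_monomial_has_derivative_axis)
    then show "pdx m f z = (\<Sum>x\<in>exps_upto k. D x z)"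
      unfolding pdx_def by (rule DERIV_imp_deriv)
  qed
  moreover have "poly_fun (k - 1) (D x)" if "x \<in> exps_upto k" for x
  proof (cases "snd x m = 0")
    case True
    then have "D x = (\<lambda>z. 0)" by (simp add: D_def fun_eq_iff)
    then show ?thesis by (simp add: poly_fun_0)
  next
    case False
    then have "fst x + sum ((snd x)(m := snd x m - 1)) UNIV \<le> k - 1"
      using that sum_fun_upd_decr[of "snd x" m] by (auto simp: exps_upto_def)
    then show ?thesis
      unfolding D_def mult.assoc[symmetric] by (intro poly_fun_cmult poly_fun_st_monomial)
  qed
  ultimately show ?thesis
    by (simp add: poly_fun_sum[OF finite_exps_upto])
qed

lemma poly_fun_sdiv:
  assumes "vpoly_fun k u"
  shows "poly_fun (k - 1) (sdiv u)"
  using assms unfolding sdiv_def[abs_def] vpoly_fun_def by (intro poly_fun_sum poly_fun_pdx) auto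

section \<open>Simplices and outward normals\<close>

definition outward_normal :: "'a::real_inner set \<Rightarrow> 'a set \<Rightarrow> 'a \<Rightarrow> bool" where
  "outward_normal K S \<nu> \<longleftrightarrow> norm \<nu> = 1 \<and> (\<forall>y\<in>K. \<forall>p\<in>S. \<nu> \<bullet> (y - p) \<le> 0)"

lemma onormal_eq_The: "onormal K S = (THE \<nu>. outward_normal K S \<nu>)"
  unfolding onormal_def outward_normal_def ..

lemma outward_normal_orthogonal:
  assumes "outward_normal K S \<nu>" "S \<subseteq> K" "p \<in> S" "q \<in> S"
  shows "\<nu> \<bullet> (p - q) = 0"
proof -
  have "\<nu> \<bullet> (p - q) \<le> 0" "\<nu> \<bullet> (q - p) \<le> 0"
    using assms by (auto simp: outward_normal_def)
  then show ?thesis by (simp add: inner_diff_right)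
qed

lemma verts_convex_hull:
  assumes "\<not> affine_dependent V"
  shows "verts (convex hull V) = V"
  using extreme_point_of_convex_hull_affine_independent[OF assms] by (auto simp: verts_def)

lemma other_vertex_exists:
  fixes V :: "'a::euclidean_space set"
  assumes "card V = DIM('a) + 1" "v \<in> V"
  obtains w where "w \<in> V - {v}"
proof -
  have "card (V - {v}) = DIM('a)" using assms by (simp add: card_Diff_singleton)
  then have "V - {v} \<noteq> {}" by (metis DIM_positive card.empty less_irrefl)
  then show ?thesis using that by blast
qed

lemma affine_hull_eq_UNIV_simplex:
  fixes V :: "'a::euclidean_space set"
  assumes "\<not> affine_dependent V" "card V = DIM('a) + 1"
  shows "affine hull V = UNIV"
proof -
  have "aff_dim V = int DIM('a)"
    using aff_dim_affine_independent[OF assms(1)] assms(2) by simp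
  then show ?thesis by (simp add: aff_dim_eq_full)
qed

lemma interior_convex_hull_simplex_nonempty:
  fixes V :: "'a::euclidean_space set"
  assumes "\<not> affine_dependent V" "card V = DIM('a) + 1"
  shows "interior (convex hull V) \<noteq> {}"
proof -
  have "V \<noteq> {}" using assms(2) by auto
  then have "rel_interior (convex hull V) \<noteq> {}" by (simp add: rel_interior_eq_empty)
  moreover have "affine hull (convex hull V) = UNIV"
    using affine_hull_eq_UNIV_simplex[OF assms] by simp
  ultimately show ?thesis by (simp add: rel_interior_interior)
qed

lemma orthogonal_simplex_eq_0:
  fixes V :: "'a::euclidean_space set"
  assumes "\<not> affine_dependent V" "card V = DIM('a) + 1" "w \<in> V"
    and "\<And>x. x \<in> V \<Longrightarrow> \<mu> \<bullet> (x - w) = 0"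
  shows "\<mu> = 0"
proof -
  have "affine hull V \<subseteq> {y. \<mu> \<bullet> y = \<mu> \<bullet> w}"
    using assms(4) by (intro hull_minimal affine_hyperplane) (auto simp: inner_diff_right)
  then have "\<mu> \<bullet> (w + \<mu>) = \<mu> \<bullet> w"
    using affine_hull_eq_UNIV_simplex[OF assms(1,2)] by auto
  then show ?thesis by (simp add: inner_add_right)
qed

lemma outward_normal_facet_iff:
  fixes V :: "'a::euclidean_space set"
  assumes V: "\<not> affine_dependent V" "card V = DIM('a) + 1" and v: "v \<in> V" and w: "w \<in> V - {v}"
  shows "outward_normal (convex hull V) (convex hull (V - {v})) \<nu> \<longleftrightarrow>
    norm \<nu> = 1 \<and> (\<forall>x\<in>V - {v}. \<nu> \<bullet> (x - w) = 0) \<and> \<nu> \<bullet> (v - w) < 0"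
proof
  assume \<nu>: "outward_normal (convex hull V) (convex hull (V - {v})) \<nu>"
  have "convex hull (V - {v}) \<subseteq> convex hull V" by (rule hull_mono) auto
  then have face: "\<nu> \<bullet> (x - w) = 0" if "x \<in> V - {v}" for x
    using that w by (intro outward_normal_orthogonal[OF \<nu>] hull_inc) auto
  have "\<nu> \<bullet> (v - w) \<le> 0"
    using \<nu> v w by (auto simp: outward_normal_def intro!: hull_inc)
  moreover have "\<nu> \<bullet> (v - w) \<noteq> 0"
  proof
    assume "\<nu> \<bullet> (v - w) = 0"
    with face have "\<nu> = 0"
      using w by (intro orthogonal_simplex_eq_0[OF V, of w]) auto
    then show False using \<nu> by (simp add: outward_normal_def)
  qed
  ultimately show "norm \<nu> = 1 \<and> (\<forall>x\<in>V - {v}. \<nu> \<bullet> (x - w) = 0) \<and> \<nu> \<bullet> (v - w) < 0"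
    using \<nu> face by (auto simp: outward_normal_def)
next
  assume \<nu>: "norm \<nu> = 1 \<and> (\<forall>x\<in>V - {v}. \<nu> \<bullet> (x - w) = 0) \<and> \<nu> \<bullet> (v - w) < 0"
  have "convex hull V \<subseteq> {y. \<nu> \<bullet> y \<le> \<nu> \<bullet> w}"
    using \<nu> by (intro hull_minimal convex_halfspace_le) (force simp: inner_diff_right)
  moreover have "convex hull (V - {v}) \<subseteq> {y. \<nu> \<bullet> y = \<nu> \<bullet> w}"
    using \<nu> by (intro hull_minimal convex_hyperplane) (force simp: inner_diff_right)
  ultimately show "outward_normal (convex hull V) (convex hull (V - {v})) \<nu>"
    using \<nu> by (fastforce simp: outward_normal_def inner_diff_right)
qed

lemma outward_normal_facet_unique:
  fixes V :: "'a::euclidean_space set"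
  assumes V: "\<not> affine_dependent V" "card V = DIM('a) + 1" and v: "v \<in> V"
    and "outward_normal (convex hull V) (convex hull (V - {v})) \<nu>"
    and "outward_normal (convex hull V) (convex hull (V - {v})) \<mu>"
  shows "\<mu> = \<nu>"
proof -
  obtain w where w: "w \<in> V - {v}" using other_vertex_exists[OF V(2) v] .
  note \<nu> = assms(4)[unfolded outward_normal_facet_iff[OF V v w]]
    and \<mu> = assms(5)[unfolded outward_normal_facet_iff[OF V v w]]
  define c where "c = (\<mu> \<bullet> (v - w)) / (\<nu> \<bullet> (v - w))"
  have "c > 0" using \<nu> \<mu> by (simp add: c_def divide_neg_neg)
  have "\<mu> - c *\<^sub>R \<nu> = 0"
  proof (rule orthogonal_simplex_eq_0[OF V])
    show "w \<in> V" using w by simp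
    fix x assume "x \<in> V"
    then show "(\<mu> - c *\<^sub>R \<nu>) \<bullet> (x - w) = 0"
      using \<nu> \<mu> by (cases "x = v") (auto simp: c_def inner_diff_left)
  qed
  then have "\<mu> = c *\<^sub>R \<nu>" by simp
  moreover have "c = 1" using \<open>c > 0\<close> \<nu> \<mu> calculation by simp
  ultimately show ?thesis by simp
qed

lemma ex_outward_normal_facet:
  fixes V :: "'a::euclidean_space set"
  assumes V: "\<not> affine_dependent V" "card V = DIM('a) + 1" and v: "v \<in> V"
  shows "\<exists>\<nu>. outward_normal (convex hull V) (convex hull (V - {v})) \<nu>"
proof -
  obtain w where w: "w \<in> V - {v}" using other_vertex_exists[OF V(2) v] .
  define X where "X = (\<lambda>x. x - w) ` (V - {v, w})"
  have "finite V" using aff_independent_finite[OF V(1)] .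
  have "card {v, w} = 2" using w by auto
  then have "card (V - {v, w}) = DIM('a) - 1"
    using V(2) v w \<open>finite V\<close> by (simp add: card_Diff_subset)
  have "dim X \<le> card X" using \<open>finite V\<close> by (intro dim_le_card') (simp add: X_def)
  also have "card X \<le> card (V - {v, w})"
    unfolding X_def by (rule card_image_le) (simp add: \<open>finite V\<close>)
  also have "\<dots> = DIM('a) - 1" by fact
  finally have "dim X < DIM('a)" using DIM_positive[where 'a='a] by linarith
  then obtain n where n: "n \<noteq> 0" "\<And>y. y \<in> span X \<Longrightarrow> orthogonal n y"
    using orthogonal_to_subspace_exists by blast
  have face: "n \<bullet> (x - w) = 0" if "x \<in> V - {v}" for x
  proof (cases "x = w")
    case False
    then have "x - w \<in> span X" using that unfolding X_def by (intro span_base) auto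
    then show ?thesis using n(2) orthogonal_def by blast
  qed simp
  have "n \<bullet> (v - w) \<noteq> 0"
  proof
    assume "n \<bullet> (v - w) = 0"
    with face have "n = 0"
      using w by (intro orthogonal_simplex_eq_0[OF V, of w]) auto
    with n(1) show False by simp
  qed
  define \<nu> where "\<nu> = (- sgn (n \<bullet> (v - w)) / norm n) *\<^sub>R n"
  have "norm \<nu> = 1 \<and> (\<forall>x\<in>V - {v}. \<nu> \<bullet> (x - w) = 0) \<and> \<nu> \<bullet> (v - w) < 0"
    using n(1) face \<open>n \<bullet> (v - w) \<noteq> 0\<close>
    by (auto simp: \<nu>_def abs_sgn_eq divide_simps sgn_if)
  then show ?thesis using outward_normal_facet_iff[OF V v w] by blast
qed

lemma barycentre_in_convex_hull:
  fixes V :: "'a::real_vector set"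
  assumes "finite V" "V \<noteq> {}"
  shows "(1 / card V) *\<^sub>R (\<Sum>x\<in>V. x) \<in> convex hull V"
proof -
  have "sum (\<lambda>x. 1 / real (card V)) V = 1" using assms by simp
  moreover have "(\<Sum>x\<in>V. (1 / real (card V)) *\<^sub>R x) = (1 / card V) *\<^sub>R (\<Sum>x\<in>V. x)"
    by (rule scaleR_sum_right[symmetric])
  ultimately show ?thesis
    unfolding convex_hull_finite[OF assms(1)]
    by (intro CollectI exI[of _ "\<lambda>x. 1 / real (card V)"]) simp
qed

lemma barycentre_segment_in_convex_hull:
  fixes V :: "'a::real_vector set"
  assumes V: "finite V" "v \<in> V" "V - {v} \<noteq> {}" and \<beta>: "sum \<beta> V = 1" "\<beta> v > 0"
  obtains t where "0 < t" "t \<le> 1"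
    "(1 - t) *\<^sub>R ((1 / card (V - {v})) *\<^sub>R (\<Sum>x\<in>V - {v}. x)) + t *\<^sub>R (\<Sum>x\<in>V. \<beta> x *\<^sub>R x)
       \<in> convex hull V"
proof
  define N where "N = real (card (V - {v}))"
  define M where "M = (\<Sum>x\<in>V. \<bar>\<beta> x\<bar>)"
  define t where "t = 1 / (1 + N * M)"
  have "card (V - {v}) \<noteq> 0" using V(1,3) by (metis card_eq_0_iff finite_Diff)
  then have "N \<ge> 1" by (simp add: N_def)
  moreover have "M \<ge> 0" by (simp add: M_def sum_nonneg)
  ultimately have "0 \<le> N * M" by simp
  then show "0 < t" "t \<le> 1" by (simp_all add: t_def)
  define \<gamma> where "\<gamma> x = (if x = v then 0 else (1 - t) / N) + t * \<beta> x" for x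
  have "0 \<le> \<gamma> x" if "x \<in> V" for x
  proof (cases "x = v")
    case False
    have "\<bar>\<beta> x\<bar> \<le> M" unfolding M_def using that V(1) by (intro member_le_sum) auto
    then have "t * N * \<bar>\<beta> x\<bar> \<le> t * N * M"
      using \<open>0 < t\<close> \<open>N \<ge> 1\<close> by simp
    also have "\<dots> = 1 - t" using \<open>0 \<le> N * M\<close> by (simp add: t_def field_simps)
    finally have "t * \<bar>\<beta> x\<bar> \<le> (1 - t) / N" using \<open>N \<ge> 1\<close> by (simp add: field_simps)
    moreover have "t * (- \<beta> x) \<le> t * \<bar>\<beta> x\<bar>" using \<open>0 < t\<close> by (intro mult_left_mono) auto
    ultimately show ?thesis using False by (simp add: \<gamma>_def)
  qed (use \<beta> \<open>0 < t\<close> in \<open>simp add: \<gamma>_def\<close>)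
  moreover have "sum \<gamma> V = 1"
    using V \<beta> \<open>N \<ge> 1\<close>
    by (simp add: \<gamma>_def sum.distrib sum.If_cases Diff_eq[symmetric] N_def
        sum_distrib_left[symmetric])
  moreover have "(\<Sum>x\<in>V. \<gamma> x *\<^sub>R x)
      = (1 - t) *\<^sub>R ((1 / N) *\<^sub>R (\<Sum>x\<in>V - {v}. x)) + t *\<^sub>R (\<Sum>x\<in>V. \<beta> x *\<^sub>R x)"
    using V
    by (simp add: \<gamma>_def scaleR_add_left sum.distrib sum.If_cases Diff_eq[symmetric]
        scaleR_sum_right if_distrib[of "\<lambda>c. c *\<^sub>R _"] cong: if_cong)
  ultimately show "(1 - t) *\<^sub>R ((1 / card (V - {v})) *\<^sub>R (\<Sum>x\<in>V - {v}. x))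
      + t *\<^sub>R (\<Sum>x\<in>V. \<beta> x *\<^sub>R x) \<in> convex hull V"
    unfolding convex_hull_finite[OF V(1)] N_def by blast
qed

lemma onormal_facet_eqI:
  fixes V :: "'d::finite stpt set"
  assumes "\<not> affine_dependent V" "card V = DIM('d stpt) + 1" "v \<in> V"
    and "outward_normal (convex hull V) (convex hull (V - {v})) \<nu>"
  shows "onormal (convex hull V) (convex hull (V - {v})) = \<nu>"
  unfolding onormal_eq_The using assms outward_normal_facet_unique by blast

lemma outward_normal_onormal:
  fixes V :: "'d::finite stpt set"
  assumes "\<not> affine_dependent V" "card V = DIM('d stpt) + 1" "v \<in> V"
  shows "outward_normal (convex hull V) (convex hull (V - {v}))
    (onormal (convex hull V) (convex hull (V - {v})))"
  using ex_outward_normal_facet[OF assms] onormal_facet_eqI[OF assms] by metis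

lemma outward_normal_separates_adjacent_vertex:
  fixes V :: "'a::euclidean_space set"
  assumes V: "\<not> affine_dependent V" "card V = DIM('a) + 1" and v: "v \<in> V" and w: "w \<in> V - {v}"
    and \<nu>: "outward_normal (convex hull V) (convex hull (V - {v})) \<nu>"
    and meet: "convex hull V \<inter> convex hull (insert v' (V - {v})) \<subseteq> convex hull (V - {v})"
  shows "0 \<le> \<nu> \<bullet> (v' - w)"
proof (rule ccontr)
  assume "\<not> 0 \<le> \<nu> \<bullet> (v' - w)"
  then have neg: "\<nu> \<bullet> (v' - w) < 0" by simp
  \<comment> \<open>then a point near the barycentre of the common facet, pushed slightly towards v',
    lies in both simplices but off the facet\<close>
  note \<nu>' = \<nu>[unfolded outward_normal_facet_iff[OF V v w]]
  have "finite V" using aff_independent_finite[OF V(1)] .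
  obtain \<beta> where \<beta>: "sum \<beta> V = 1" "(\<Sum>x\<in>V. \<beta> x *\<^sub>R x) = v'"
    using affine_hull_eq_UNIV_simplex[OF V] affine_hull_finite[OF \<open>finite V\<close>] by blast
  have "v' - w = (\<Sum>x\<in>V. \<beta> x *\<^sub>R (x - w))"
    using \<beta> by (simp add: scaleR_diff_right sum_subtractf scaleR_sum_left[symmetric])
  then have "\<nu> \<bullet> (v' - w) = (\<Sum>x\<in>V. \<beta> x * (\<nu> \<bullet> (x - w)))"
    by (simp add: inner_sum_right)
  also have "\<dots> = \<beta> v * (\<nu> \<bullet> (v - w))"
    using \<nu>' by (simp add: sum.remove[OF \<open>finite V\<close> v])
  finally have "0 < \<beta> v" using neg \<nu>' by (simp add: mult_less_0_iff)
  define S where "S = convex hull (V - {v})"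
  define c where "c = (1 / card (V - {v})) *\<^sub>R (\<Sum>x\<in>V - {v}. x)"
  have "c \<in> S"
    unfolding c_def S_def using \<open>finite V\<close> w by (intro barycentre_in_convex_hull) auto
  obtain t where t: "0 < t" "t \<le> 1" "(1 - t) *\<^sub>R c + t *\<^sub>R v' \<in> convex hull V"
    using barycentre_segment_in_convex_hull[OF \<open>finite V\<close> v _ \<beta>(1) \<open>0 < \<beta> v\<close>] w
    unfolding c_def \<beta>(2) by blast
  have "S \<subseteq> convex hull (insert v' (V - {v}))" unfolding S_def by (rule hull_mono) auto
  then have "(1 - t) *\<^sub>R c + t *\<^sub>R v' \<in> convex hull (insert v' (V - {v}))"
    using \<open>c \<in> S\<close> t(1,2) by (intro convexD) (auto intro: hull_inc)
  with t(3) meet have "(1 - t) *\<^sub>R c + t *\<^sub>R v' \<in> S" unfolding S_def by blast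
  moreover have "S \<subseteq> convex hull V" unfolding S_def by (rule hull_mono) auto
  moreover have "w \<in> S" unfolding S_def using w by (rule hull_inc)
  ultimately have "\<nu> \<bullet> ((1 - t) *\<^sub>R c + t *\<^sub>R v' - w) = 0" "\<nu> \<bullet> (c - w) = 0"
    using \<open>c \<in> S\<close> by (auto intro: outward_normal_orthogonal[OF \<nu>[folded S_def]])
  moreover have "(1 - t) *\<^sub>R c + t *\<^sub>R v' - w = (1 - t) *\<^sub>R (c - w) + t *\<^sub>R (v' - w)"
    by (simp add: algebra_simps)
  ultimately have "t * (\<nu> \<bullet> (v' - w)) = 0" by (simp add: inner_add_right)
  then show False using t(1) neg by simp
qed

lemma onormal_adjacent_simplices:
  fixes V V' :: "'d::finite stpt set"
  assumes V: "\<not> affine_dependent V" "card V = DIM('d stpt) + 1"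
    and V': "\<not> affine_dependent V'" "card V' = DIM('d stpt) + 1"
    and v: "v \<in> V" and v': "v' \<in> V'" and common: "V' - {v'} = V - {v}"
    and meet: "convex hull V \<inter> convex hull V' \<subseteq> convex hull (V - {v})"
  shows "onormal (convex hull V') (convex hull (V' - {v'}))
    = - onormal (convex hull V) (convex hull (V - {v}))"
proof -
  obtain w where w: "w \<in> V - {v}" using other_vertex_exists[OF V(2) v] .
  define \<nu> where "\<nu> = onormal (convex hull V) (convex hull (V - {v}))"
  have \<nu>: "outward_normal (convex hull V) (convex hull (V - {v})) \<nu>"
    unfolding \<nu>_def by (rule outward_normal_onormal[OF V v])
  note \<nu>' = \<nu>[unfolded outward_normal_facet_iff[OF V v w]]
  have V'_eq: "V' = insert v' (V - {v})" using v' common by blast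
  have w': "w \<in> V' - {v'}" using w common by simp
  have "0 \<le> \<nu> \<bullet> (v' - w)"
    using meet V'_eq by (intro outward_normal_separates_adjacent_vertex[OF V v w \<nu>]) auto
  moreover have "\<nu> \<bullet> (v' - w) \<noteq> 0"
  proof
    assume v'_face: "\<nu> \<bullet> (v' - w) = 0"
    have "\<nu> = 0"
    proof (rule orthogonal_simplex_eq_0[OF V'])
      show "w \<in> V'" using w' by simp
      fix x assume "x \<in> V'"
      then show "\<nu> \<bullet> (x - w) = 0" using \<nu>' V'_eq v'_face by auto
    qed
    then show False using \<nu>' by simp
  qed
  ultimately have
    "norm (- \<nu>) = 1 \<and> (\<forall>x\<in>V' - {v'}. - \<nu> \<bullet> (x - w) = 0) \<and> - \<nu> \<bullet> (v' - w) < 0"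
    using \<nu>' common by simp
  then have "outward_normal (convex hull V') (convex hull (V' - {v'})) (- \<nu>)"
    using outward_normal_facet_iff[OF V' v' w'] by blast
  then show ?thesis unfolding \<nu>_def by (rule onormal_facet_eqI[OF V' v'])
qed

section \<open>Integrals over cells and facets\<close>

lemma integrable_continuous_compact:
  fixes f :: "'a::euclidean_space \<Rightarrow> real"
  assumes "compact S" "continuous_on S f"
  shows "f integrable_on S"
proof -
  have "(\<lambda>x. indicator S x *\<^sub>R f x) integrable_on UNIV"
    by (rule integrable_on_lborel[OF borel_integrable_compact[OF assms]])
  then have "(\<lambda>x. if x \<in> S then f x else 0) integrable_on UNIV"
    by (rule integrable_eq) (auto simp: indicator_def)
  then show ?thesis by (simp add: integrable_restrict_UNIV)
qed

lemma integral_eq_0_imp_0_convex: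
  fixes g :: "'a::euclidean_space \<Rightarrow> real"
  assumes S: "compact S" "convex S" "interior S \<noteq> {}"
    and g: "continuous_on S g" "\<And>x. x \<in> S \<Longrightarrow> 0 \<le> g x" and "integral S g = 0" and "x \<in> S"
  shows "g x = 0"
proof -
  have int_S: "g integrable_on S" using integrable_continuous_compact S(1) g(1) .
  have "g y = 0" if y: "y \<in> interior S" for y
  proof -
    obtain a b where ab: "cbox a b \<subseteq> interior S" "y \<in> box a b"
      using open_contains_cbox[OF open_interior y] by metis
    then have "cbox a b \<subseteq> S" using interior_subset by blast
    then have cont: "continuous_on (cbox a b) g" and int_ab: "g integrable_on cbox a b"
      using continuous_on_subset[OF g(1)] integrable_continuous by blast+
    have "integral (cbox a b) g \<le> integral S g"
      using \<open>cbox a b \<subseteq> S\<close> g(2) by (intro integral_subset_le int_ab int_S) auto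
    moreover have "0 \<le> integral (cbox a b) g"
      using \<open>cbox a b \<subseteq> S\<close> g(2) by (intro integral_nonneg int_ab) auto
    ultimately have "(g has_integral 0) (cbox a b)"
      using \<open>integral S g = 0\<close> int_ab by (simp add: has_integral_iff)
    then show ?thesis
      using has_integral_0_cbox_imp_0[OF cont _ _ _ box_subset_cbox[THEN subsetD, OF ab(2)]]
        \<open>cbox a b \<subseteq> S\<close> box_subset_cbox g(2) ab(2) by blast
  qed
  moreover have "closed {x\<in>S. g x = 0}"
    using continuous_closed_preimage_constant[OF g(1)] compact_imp_closed[OF S(1)] by blast
  ultimately have "closure (interior S) \<subseteq> {x\<in>S. g x = 0}"
    using interior_subset by (intro closure_minimal) auto
  moreover have "closure (interior S) = S"
    using convex_closure_interior[OF S(2,3)] compact_imp_closed[OF S(1)] by simp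
  ultimately show ?thesis using \<open>x \<in> S\<close> by blast
qed

definition ref_simplex :: "(real^'d::finite) set" where
  "ref_simplex = {y. (\<forall>i. 0 \<le> y $ i) \<and> (\<Sum>i\<in>UNIV. y $ i) \<le> 1}"

lemma inner_axis_1_left: "axis i 1 \<bullet> y = y $ i"
  by (simp add: inner_axis')

lemma inner_ones_left: "(\<chi> i. 1) \<bullet> y = (\<Sum>i\<in>UNIV. y $ i)"
  by (simp add: inner_vec_def)

lemma ref_simplex_eq_halfspaces:
  "ref_simplex = (\<Inter>i. {y. axis i 1 \<bullet> y \<ge> 0}) \<inter> {y. (\<chi> i. 1) \<bullet> y \<le> (1::real)}"
  by (auto simp: ref_simplex_def inner_axis_1_left inner_ones_left)

lemma convex_ref_simplex: "convex ref_simplex"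
  unfolding ref_simplex_eq_halfspaces
  by (intro convex_Int convex_INT convex_halfspace_ge convex_halfspace_le)

lemma compact_ref_simplex: "compact ref_simplex"
proof -
  have "ref_simplex \<subseteq> cbox 0 (\<chi> i. 1)"
  proof
    fix y :: "real^'d" assume y: "y \<in> ref_simplex"
    have "y $ i \<le> 1" for i
      using member_le_sum[of i UNIV "\<lambda>i. y $ i"] y by (auto simp: ref_simplex_def)
    then show "y \<in> cbox 0 (\<chi> i. 1)" using y by (auto simp: ref_simplex_def mem_box_cart)
  qed
  then have "bounded ref_simplex" using bounded_cbox bounded_subset by blast
  moreover have "closed ref_simplex"
    unfolding ref_simplex_eq_halfspaces
    by (intro closed_Int closed_INT ballI closed_halfspace_ge closed_halfspace_le)
  ultimately show ?thesis by (simp add: compact_eq_bounded_closed)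
qed

lemma interior_ref_simplex_nonempty: "interior (ref_simplex :: (real^'d::finite) set) \<noteq> {}"
proof -
  define U :: "(real^'d) set" where
    "U = (\<Inter>i. {y. axis i 1 \<bullet> y > 0}) \<inter> {y. (\<chi> i. 1) \<bullet> y < 1}"
  have "open U"
    unfolding U_def by (intro open_Int open_INT ballI open_halfspace_gt open_halfspace_lt) auto
  moreover have "U \<subseteq> ref_simplex"
    unfolding U_def ref_simplex_eq_halfspaces by (auto intro: less_imp_le)
  moreover have "(\<chi> i. 1 / (2 * CARD('d))) \<in> U"
    by (simp add: U_def inner_axis_1_left inner_ones_left)
  ultimately show ?thesis using interior_maximal by blast
qed

definition facet_origin :: "'d::finite stpt set \<Rightarrow> 'd stpt" where
  "facet_origin S = (SOME p. p \<in> verts S)"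

definition facet_edge :: "'d::finite stpt set \<Rightarrow> 'd \<Rightarrow> 'd stpt" where
  "facet_edge S = (SOME e. bij_betw e UNIV (verts S - {facet_origin S}))"

definition facet_param :: "'d::finite stpt set \<Rightarrow> real^'d \<Rightarrow> 'd stpt" where
  "facet_param S y = facet_origin S + (\<Sum>i\<in>UNIV. (y $ i) *\<^sub>R (facet_edge S i - facet_origin S))"

definition facet_gram :: "'d::finite stpt set \<Rightarrow> real^'d^'d" where
  "facet_gram S = (\<chi> i j. (facet_edge S i - facet_origin S) \<bullet> (facet_edge S j - facet_origin S))"

lemma fint_eq:
  "fint S f = sqrt (det (facet_gram S)) * integral ref_simplex (\<lambda>y. f (facet_param S y))"
  unfolding fint_def Let_def facet_gram_def facet_param_def facet_edge_def facet_origin_def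
    ref_simplex_def ..

lemma fint_0 [simp]: "fint S (\<lambda>z. 0) = 0"
  by (simp add: fint_eq)

lemma continuous_on_facet_param: "continuous_on A (facet_param S)"
  unfolding facet_param_def[abs_def] by (intro continuous_intros)

lemma integrable_on_ref_simplex:
  fixes f :: "'d::finite stpt \<Rightarrow> real"
  assumes "continuous_on UNIV f"
  shows "(\<lambda>y. f (facet_param S y)) integrable_on ref_simplex"
  using continuous_on_compose2[OF assms continuous_on_facet_param]
  by (intro integrable_continuous_compact compact_ref_simplex) auto

lemma fint_add:
  fixes f g :: "'d::finite stpt \<Rightarrow> real"
  assumes "continuous_on UNIV f" "continuous_on UNIV g"
  shows "fint S (\<lambda>z. f z + g z) = fint S f + fint S g"
  unfolding fint_eq
  using integral_add[OF integrable_on_ref_simplex[OF assms(1)]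
      integrable_on_ref_simplex[OF assms(2)]]
  by (simp add: distrib_left)

lemma det_gram_nonzero:
  fixes e :: "'d::finite \<Rightarrow> 'a::real_inner"
  assumes indep: "\<And>x :: real^'d. (\<Sum>i\<in>UNIV. (x $ i) *\<^sub>R e i) = 0 \<Longrightarrow> x = 0"
  shows "det (\<chi> i j. e i \<bullet> e j) \<noteq> 0"
proof -
  define G :: "real^'d^'d" where "G = (\<chi> i j. e i \<bullet> e j)"
  have "x = 0" if "G *v x = 0" for x
  proof -
    have "x \<bullet> (G *v x) = (\<Sum>i\<in>UNIV. (x $ i) *\<^sub>R e i) \<bullet> (\<Sum>i\<in>UNIV. (x $ i) *\<^sub>R e i)"
      unfolding inner_sum_left inner_sum_right
      by (simp add: G_def matrix_vector_mult_def inner_vec_def sum_distrib_left mult_ac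
          inner_commute)
    then show ?thesis using that indep by simp
  qed
  then have "invertible G"
    using matrix_left_invertible_ker invertible_left_inverse by blast
  then show ?thesis by (simp add: G_def invertible_det_nz)
qed

context
  fixes W :: "'d::finite stpt set"
  assumes W: "\<not> affine_dependent W" "card W = CARD('d) + 1"
begin

lemma finite_facet_vertices: "finite W"
  using W(2) card.infinite by fastforce

lemma facet_origin_mem: "facet_origin (convex hull W) \<in> W"
proof -
  have "W \<noteq> {}" using W(2) by auto
  then show ?thesis unfolding facet_origin_def verts_convex_hull[OF W(1)] by (simp add: some_in_eq)
qed

lemma bij_betw_facet_edge:
  "bij_betw (facet_edge (convex hull W)) UNIV (W - {facet_origin (convex hull W)})"
proof -
  have "card (W - {facet_origin (convex hull W)}) = CARD('d)"
    using W(2) facet_origin_mem by simp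
  then have "\<exists>e :: 'd \<Rightarrow> 'd stpt. bij_betw e UNIV (W - {facet_origin (convex hull W)})"
    using finite_same_card_bij[of "UNIV :: 'd set" "W - {facet_origin (convex hull W)}"]
      finite_facet_vertices by (metis finite_Diff finite_class.finite_UNIV)
  then show ?thesis unfolding facet_edge_def verts_convex_hull[OF W(1)] by (rule someI_ex)
qed

lemma sum_facet_vertices:
  "(\<Sum>w\<in>W. g w)
    = g (facet_origin (convex hull W)) + (\<Sum>i\<in>UNIV. g (facet_edge (convex hull W) i))"
  using sum.remove[OF finite_facet_vertices facet_origin_mem, of g]
    sum.reindex_bij_betw[OF bij_betw_facet_edge, of g]
  by simp

lemma facet_edges_independent:
  assumes
    "(\<Sum>i\<in>UNIV. (x $ i) *\<^sub>R (facet_edge (convex hull W) i - facet_origin (convex hull W))) = 0"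
  shows "x = 0"
proof (rule ccontr)
  define p0 where "p0 = facet_origin (convex hull W)"
  define e where "e = facet_edge (convex hull W)"
  have e: "e i \<in> W - {p0}" "inv_into UNIV e (e i) = i" for i
    using bij_betw_facet_edge unfolding e_def p0_def by (auto simp: bij_betw_def)
  assume "x \<noteq> 0"
  then obtain i0 where "x $ i0 \<noteq> 0" by (metis vec_eq_iff zero_index)
  \<comment> \<open>extend the coefficients of x to an affine dependence among the vertices\<close>
  define u where "u w = (if w = p0 then - (\<Sum>i\<in>UNIV. x $ i) else x $ inv_into UNIV e w)" for w
  have "sum u W = 0"
    using e by (simp add: sum_facet_vertices u_def p0_def[symmetric] e_def[symmetric])
  moreover have "(\<Sum>w\<in>W. u w *\<^sub>R w) = 0"
  proof -
    have "(\<Sum>w\<in>W. u w *\<^sub>R w)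
        = (- (\<Sum>i\<in>UNIV. x $ i)) *\<^sub>R p0 + (\<Sum>i\<in>UNIV. (x $ i) *\<^sub>R e i)"
      using e by (simp add: sum_facet_vertices u_def p0_def[symmetric] e_def[symmetric])
    also have "\<dots> = (\<Sum>i\<in>UNIV. (x $ i) *\<^sub>R (e i - p0))"
      by (simp add: scaleR_diff_right sum_subtractf scaleR_sum_left)
    finally show ?thesis using assms by (simp add: p0_def e_def)
  qed
  moreover have "u (e i0) \<noteq> 0" using e \<open>x $ i0 \<noteq> 0\<close> by (simp add: u_def)
  ultimately have "affine_dependent W"
    using e(1)[of i0] affine_dependent_explicit_finite[OF finite_facet_vertices] by blast
  then show False using W(1) by simp
qed

lemma det_facet_gram_nonzero: "det (facet_gram (convex hull W)) \<noteq> 0"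
  unfolding facet_gram_def by (rule det_gram_nonzero) (rule facet_edges_independent)

lemma convex_hull_subset_facet_param_image:
  "convex hull W \<subseteq> facet_param (convex hull W) ` ref_simplex"
proof
  define p0 where "p0 = facet_origin (convex hull W)"
  define e where "e = facet_edge (convex hull W)"
  have e: "e i \<in> W - {p0}" for i
    using bij_betw_facet_edge unfolding e_def p0_def by (auto simp: bij_betw_def)
  fix z assume "z \<in> convex hull W"
  then obtain \<mu> where \<mu>: "\<forall>x\<in>W. 0 \<le> \<mu> x" "sum \<mu> W = 1" "(\<Sum>x\<in>W. \<mu> x *\<^sub>R x) = z"
    unfolding convex_hull_finite[OF finite_facet_vertices] by blast
  define y :: "real^'d" where "y = (\<chi> i. \<mu> (e i))"
  have sum_y: "(\<Sum>i\<in>UNIV. y $ i) = 1 - \<mu> p0"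
    using \<mu>(2) by (simp add: y_def sum_facet_vertices p0_def e_def)
  then have "y \<in> ref_simplex"
    using \<mu>(1) e facet_origin_mem by (auto simp: ref_simplex_def y_def p0_def)
  moreover have "facet_param (convex hull W) y = z"
  proof -
    have "facet_param (convex hull W) y
        = p0 + (\<Sum>i\<in>UNIV. y $ i *\<^sub>R e i) - (\<Sum>i\<in>UNIV. y $ i) *\<^sub>R p0"
      by (simp add: facet_param_def p0_def[symmetric] e_def[symmetric] scaleR_diff_right
          sum_subtractf scaleR_sum_left)
    also have "\<dots> = \<mu> p0 *\<^sub>R p0 + (\<Sum>i\<in>UNIV. y $ i *\<^sub>R e i)"
      unfolding sum_y by (simp add: scaleR_diff_left)
    also have "\<dots> = z"
      using \<mu>(3) by (simp add: y_def sum_facet_vertices p0_def e_def)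
    finally show ?thesis .
  qed
  ultimately show "z \<in> facet_param (convex hull W) ` ref_simplex" by blast
qed

lemma fint_eq_0_imp_0:
  assumes g: "continuous_on UNIV g" "\<And>z. 0 \<le> g z" and "fint (convex hull W) g = 0"
    and "z \<in> convex hull W"
  shows "g z = 0"
proof -
  let ?\<phi> = "facet_param (convex hull W)"
  have int0: "integral ref_simplex (\<lambda>y. g (?\<phi> y)) = 0"
    using \<open>fint (convex hull W) g = 0\<close> det_facet_gram_nonzero by (simp add: fint_eq)
  have cont: "continuous_on ref_simplex (\<lambda>y. g (?\<phi> y))"
    by (rule continuous_on_compose2[OF g(1) continuous_on_facet_param]) auto
  have "g (?\<phi> y) = 0" if "y \<in> ref_simplex" for y
    by (rule integral_eq_0_imp_0_convex[OF compact_ref_simplex convex_ref_simplex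
          interior_ref_simplex_nonempty cont _ int0 that]) (rule g(2))
  then show ?thesis using convex_hull_subset_facet_param_image \<open>z \<in> convex hull W\<close> by blast
qed

end

section \<open>Meshes, test functions and the discrete constraint\<close>

lemma st_meshD:
  assumes "st_mesh T tn tn1"
  shows "finite T" "\<And>K. K \<in> T \<Longrightarrow> st_simplex K"
    "\<And>K K'. K \<in> T \<Longrightarrow> K' \<in> T \<Longrightarrow> K \<noteq> K' \<Longrightarrow> K \<inter> K' = convex hull (verts K \<inter> verts K')"
  using assms by (auto simp: st_mesh_def)

lemma st_simplexE:
  fixes K :: "'d::finite stpt set"
  assumes "st_simplex K"
  obtains V
  where "\<not> affine_dependent V" "card V = DIM('d stpt) + 1" "K = convex hull V" "verts K = V"
  using assms verts_convex_hull by (fastforce simp: st_simplex_def)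

lemma st_simplex_facetE:
  fixes K :: "'d::finite stpt set"
  assumes "st_simplex K" "S \<in> facets K"
  obtains V v where "\<not> affine_dependent V" "card V = DIM('d stpt) + 1" "v \<in> V"
    "K = convex hull V" "S = convex hull (V - {v})"
  using assms by (elim st_simplexE) (auto simp: facets_def)

lemma st_simplex_compact_convex_interior:
  fixes K :: "'d::finite stpt set"
  assumes "st_simplex K"
  shows "compact K" "convex K" "interior K \<noteq> {}"
proof -
  obtain V where V: "\<not> affine_dependent V" "card V = DIM('d stpt) + 1" "K = convex hull V"
    using st_simplexE[OF assms] by metis
  then have "finite V" using aff_independent_finite by blast
  with V show "compact K" "convex K" "interior K \<noteq> {}"
    by (simp_all add: compact_convex_hull finite_imp_compact interior_convex_hull_simplex_nonempty)
qed

lemma finite_Qfacets: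
  assumes "st_simplex K"
  shows "finite (Qfacets K)"
proof -
  have "facets K = (\<lambda>v. convex hull (verts K - {v})) ` verts K" by (auto simp: facets_def)
  then show ?thesis
    using assms by (auto elim!: st_simplexE simp: Qfacets_def aff_independent_finite)
qed

lemma fint_square_eq_0_imp_0:
  fixes K :: "'d::finite stpt set"
  assumes "st_simplex K" "S \<in> facets K" "continuous_on UNIV h"
    and "fint S (\<lambda>z. h z * h z) = 0" "z \<in> S"
  shows "h z = 0"
proof -
  obtain V v where V: "\<not> affine_dependent V" "card V = DIM('d stpt) + 1" "v \<in> V"
    and S: "S = convex hull (V - {v})"
    using st_simplex_facetE[OF assms(1,2)] by metis
  have "\<not> affine_dependent (V - {v})" using V(1) affine_dependent_subset by blast
  moreover have "card (V - {v}) = CARD('d) + 1" using V(2,3) by simp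
  ultimately have "h z * h z = 0"
    using assms(3-5) unfolding S by (intro fint_eq_0_imp_0) (auto intro: continuous_intros)
  then show ?thesis by simp
qed

lemma Qfacets_boundary_facet:
  assumes "S \<in> FB T" "K \<in> cells_of T S"
  shows "{K'\<in>T. S \<in> Qfacets K'} = {K}"
proof -
  have "card (cells_of T S) = 1" using assms(1) by (simp add: FB_def)
  then have cells: "cells_of T S = {K}" using assms(2) by (auto simp: card_1_singleton_iff)
  obtain K' where "K' \<in> T" "S \<in> Qfacets K'" using assms(1) by (auto simp: FB_def Fn_def)
  then have "K' = K" using cells by (auto simp: cells_of_def Qfacets_def)
  then show ?thesis
    using cells \<open>K' \<in> T\<close> \<open>S \<in> Qfacets K'\<close> by (auto simp: cells_of_def Qfacets_def)
qed

context
  fixes T :: "'d::finite stpt set set" and tn tn1 :: real and S K1 K2 :: "'d stpt set"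
  assumes mesh: "st_mesh T tn tn1" and S: "S \<in> FI T"
    and K12: "K1 \<in> cells_of T S" "K2 \<in> cells_of T S" "K1 \<noteq> K2"
begin

lemma onormal_interior_facet: "onormal K2 S = - onormal K1 S"
proof -
  have K1: "K1 \<in> T" "S \<in> facets K1" and K2: "K2 \<in> T" "S \<in> facets K2"
    using K12 by (auto simp: cells_of_def)
  obtain V1 v1 where V1: "\<not> affine_dependent V1" "card V1 = DIM('d stpt) + 1" "v1 \<in> V1"
    "K1 = convex hull V1" "S = convex hull (V1 - {v1})"
    using st_simplex_facetE[OF st_meshD(2)[OF mesh K1(1)] K1(2)] by metis
  obtain V2 v2 where V2: "\<not> affine_dependent V2" "card V2 = DIM('d stpt) + 1" "v2 \<in> V2"
    "K2 = convex hull V2" "S = convex hull (V2 - {v2})"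
    using st_simplex_facetE[OF st_meshD(2)[OF mesh K2(1)] K2(2)] by metis
  have "verts S = V1 - {v1}" "verts S = V2 - {v2}"
    using V1(1,5) V2(1,5) affine_dependent_subset[of _ V1] affine_dependent_subset[of _ V2]
    by (metis Diff_subset verts_convex_hull)+
  then have common: "V2 - {v2} = V1 - {v1}" by simp
  have "v1 \<noteq> v2"
  proof
    assume "v1 = v2"
    then have "V1 = V2" using common V1(3) V2(3) by blast
    then show False using K12(3) V1(4) V2(4) by simp
  qed
  then have "V1 \<inter> V2 = V1 - {v1}" using common V1(3) V2(3) by blast
  then have "K1 \<inter> K2 = S"
    using st_meshD(3)[OF mesh K1(1) K2(1) K12(3)] V1 V2 verts_convex_hull by metis
  then show ?thesis
    using onormal_adjacent_simplices[OF V1(1,2) V2(1,2) V1(3) V2(3) common] V1(4,5) V2(4,5) by simp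
qed

lemma Qfacets_interior_facet: "{K\<in>T. S \<in> Qfacets K} = {K1, K2}"
proof -
  have "card (cells_of T S) = 2" using S by (simp add: FI_def)
  then have cells: "cells_of T S = {K1, K2}"
    using K12 by (metis card_2_iff doubleton_eq_iff insertE singletonD)
  have "nt K2 S = - nt K1 S" using onormal_interior_facet by (simp add: nt_def)
  moreover obtain K' where "K' \<in> T" "S \<in> Qfacets K'" using S by (auto simp: FI_def Fn_def)
  ultimately have "\<bar>nt K1 S\<bar> \<noteq> 1"
    using cells by (auto simp: cells_of_def Qfacets_def)
  then show ?thesis
    using cells \<open>nt K2 S = - nt K1 S\<close> by (auto simp: cells_of_def Qfacets_def)
qed

end

lemma pdx_0 [simp]: "pdx j (\<lambda>y. 0) z = 0"
  by (simp add: pdx_def)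

lemma pdt_0 [simp]: "pdt (\<lambda>y. 0) z = 0"
  by (simp add: pdt_def)

lemma dtime_0 [simp]: "dtime (\<lambda>y. 0) z = 0"
  by (simp add: dtime_def vec_eq_iff)

lemma dnormal_0 [simp]: "dnormal (\<lambda>y. 0) n z = 0"
  by (simp add: dnormal_def vec_eq_iff)

lemma forms_zero_test:
  "t_form T FN u ub w wb (\<lambda>K z. 0) (\<lambda>S z. 0) = 0"
  "a_form T nu alpha u ub (\<lambda>K z. 0) (\<lambda>S z. 0) = 0"
  "b_form T p pb (\<lambda>K z. 0) (\<lambda>S z. 0) = 0"
  "rhs_form T FN f g um (\<lambda>K z. 0) (\<lambda>S z. 0) = 0"
  by (simp_all add: t_form_def a_form_def b_form_def rhs_form_def conv_term_def grad_inner_def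
      sdiv_def cong: if_cong)

lemma b_form_eq_0_if_solution:
  assumes "\<forall>v vb q qb. Vstar k T FD v vb \<longrightarrow> Qstar k T q qb \<longrightarrow>
           t_form T FN u ub w wb v vb + a_form T nu alpha u ub v vb + b_form T p pb v vb
             - b_form T q qb u ub = rhs_form T FN f g um v vb"
    and "Qstar k T q qb"
  shows "b_form T q qb u ub = 0"
proof -
  have "Vstar k T FD (\<lambda>K z. 0) (\<lambda>S z. 0)"
    by (simp add: Vstar_def vpoly_fun_def poly_fun_0)
  then show ?thesis using assms by (force simp: forms_zero_test)
qed

lemma Qstar_cell_test:
  assumes "poly_fun (k - 1) r"
  shows "Qstar k T ((\<lambda>_ z. 0)(K := r)) (\<lambda>S z. 0)"
  using assms by (simp add: Qstar_def poly_fun_0)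

lemma Qstar_facet_test:
  assumes "poly_fun k h"
  shows "Qstar k T (\<lambda>K z. 0) ((\<lambda>_ z. 0)(S := h))"
  using assms by (simp add: Qstar_def poly_fun_0)

lemma b_form_cell_test:
  assumes "finite T" "K \<in> T"
  shows "b_form T ((\<lambda>_ z. 0)(K := r)) (\<lambda>S z. 0) u ub = - integral K (\<lambda>z. r z * sdiv (u K) z)"
  using assms
  by (simp add: b_form_def if_distrib[of "\<lambda>f. integral _ (\<lambda>z. f z * _ z)"] sum.delta'
      cong: if_cong)

lemma b_form_facet_test:
  assumes "finite T" "\<And>K. K \<in> T \<Longrightarrow> finite (Qfacets K)"
  shows "b_form T (\<lambda>K z. 0) ((\<lambda>_ z. 0)(S := h)) u ub
    = (\<Sum>K\<in>{K\<in>T. S \<in> Qfacets K}. fint S (\<lambda>z. ((u K z - ub S z) \<bullet> nx K S) * h z))"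
proof -
  have "(\<Sum>S'\<in>Qfacets K.
          fint S' (\<lambda>z. ((u K z - ub S' z) \<bullet> nx K S') * ((\<lambda>_ z. 0)(S := h)) S' z))
      = (if S \<in> Qfacets K then fint S (\<lambda>z. ((u K z - ub S z) \<bullet> nx K S) * h z) else 0)"
    if "K \<in> T" for K
    using assms(2)[OF that]
    by (simp add: if_distrib[of "\<lambda>f. fint _ (\<lambda>z. _ z * f z)"] sum.delta' cong: if_cong)
  then show ?thesis
    using assms(1) by (simp add: b_form_def sum.inter_filter)
qed

context
  fixes T FD :: "'d::finite stpt set set" and tn tn1 :: real and k :: nat
    and u ub :: "'d stpt set \<Rightarrow> 'd stpt \<Rightarrow> real^'d"
  assumes mesh: "st_mesh T tn tn1" and u: "Vstar k T FD u ub"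
    and b_orth: "\<And>q qb. Qstar k T q qb \<Longrightarrow> b_form T q qb u ub = 0"
begin

lemma sdiv_eq_0_on_cells:
  assumes "K \<in> T" "z \<in> K"
  shows "sdiv (u K) z = 0"
proof -
  note simplex_props = st_simplex_compact_convex_interior[OF st_meshD(2)[OF mesh assms(1)]]
  have div_poly: "poly_fun (k - 1) (sdiv (u K))"
    using u assms(1) by (intro poly_fun_sdiv) (simp add: Vstar_def)
  have int0: "integral K (\<lambda>z. sdiv (u K) z * sdiv (u K) z) = 0"
    using b_orth[OF Qstar_cell_test[OF div_poly, where K = K]]
      b_form_cell_test[OF st_meshD(1)[OF mesh] assms(1), of "sdiv (u K)" u ub]
    by simp
  have cont: "continuous_on K (\<lambda>z. sdiv (u K) z * sdiv (u K) z)"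
    by (intro continuous_on_mult continuous_on_poly_fun[OF div_poly])
  have "sdiv (u K) z * sdiv (u K) z = 0"
    by (rule integral_eq_0_imp_0_convex[OF simplex_props cont _ int0 assms(2)]) simp
  then show ?thesis by simp
qed

lemma normal_trace_on_boundary_facets:
  assumes "S \<in> FB T" "K \<in> cells_of T S" "z \<in> S"
  shows "u K z \<bullet> nx K S = ub S z \<bullet> nx K S"
proof -
  have K: "K \<in> T" "S \<in> facets K" using assms(2) by (auto simp: cells_of_def)
  have "S \<in> Fn T" using assms(1) by (simp add: FB_def)
  define h where "h z = (u K z - ub S z) \<bullet> nx K S" for z
  have h: "poly_fun k h"
    unfolding h_def using u K(1) \<open>S \<in> Fn T\<close>
    by (intro poly_fun_inner vpoly_fun_diff) (auto simp: Vstar_def)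
  have "fint S (\<lambda>z. h z * h z) = 0"
    using b_orth[OF Qstar_facet_test[OF h, where S = S]] Qfacets_boundary_facet[OF assms(1,2)]
      b_form_facet_test[OF st_meshD(1)[OF mesh] finite_Qfacets[OF st_meshD(2)[OF mesh]]]
    by (simp add: h_def)
  then have "h z = 0"
    using fint_square_eq_0_imp_0[OF st_meshD(2)[OF mesh K(1)] K(2) continuous_on_poly_fun[OF h]]
      assms(3) by blast
  then show ?thesis by (simp add: h_def inner_diff_left)
qed

lemma normal_jump_on_interior_facets:
  assumes S: "S \<in> FI T" and K12: "K1 \<in> cells_of T S" "K2 \<in> cells_of T S" "K1 \<noteq> K2"
    and "z \<in> S"
  shows "u K1 z \<bullet> nx K1 S + u K2 z \<bullet> nx K2 S = 0"
proof -
  have K1: "K1 \<in> T" "S \<in> facets K1" and K2: "K2 \<in> T" using K12 by (auto simp: cells_of_def)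
  have "S \<in> Fn T" using S by (simp add: FI_def)
  have nx2: "nx K2 S = - nx K1 S"
    using onormal_interior_facet[OF mesh S K12] by (simp add: nx_def)
  define h where "h z = u K1 z \<bullet> nx K1 S + u K2 z \<bullet> nx K2 S" for z
  define g where "g K = (\<lambda>z. ((u K z - ub S z) \<bullet> nx K S) * h z)" for K
  have u_poly: "vpoly_fun k (u K)" if "K \<in> T" for K using u that by (simp add: Vstar_def)
  have h: "poly_fun k h"
    unfolding h_def using K1(1) K2 by (intro poly_fun_add poly_fun_inner u_poly)
  have "continuous_on UNIV (g K)" if "K \<in> T" for K
  proof -
    have "poly_fun k (\<lambda>z. (u K z - ub S z) \<bullet> nx K S)"
      using u that \<open>S \<in> Fn T\<close> by (intro poly_fun_inner vpoly_fun_diff) (auto simp: Vstar_def)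
    from continuous_on_poly_fun[OF this] continuous_on_poly_fun[OF h] show ?thesis
      unfolding g_def by (rule continuous_on_mult)
  qed
  moreover have "g K1 z + g K2 z = h z * h z" for z
    unfolding g_def h_def nx2 by (simp add: inner_diff_left algebra_simps)
  ultimately have "fint S (\<lambda>z. h z * h z) = fint S (g K1) + fint S (g K2)"
    using fint_add[of "g K1" "g K2" S] K1(1) K2 by simp
  also have "\<dots> = b_form T (\<lambda>K z. 0) ((\<lambda>_ z. 0)(S := h)) u ub"
    using Qfacets_interior_facet[OF mesh S K12] K12(3)
      b_form_facet_test[OF st_meshD(1)[OF mesh] finite_Qfacets[OF st_meshD(2)[OF mesh]]]
    by (simp add: g_def)
  also have "\<dots> = 0"
    using b_orth Qstar_facet_test[OF h] by blast
  finally have "h z = 0"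
    using fint_square_eq_0_imp_0[OF st_meshD(2)[OF mesh K1(1)] K1(2) continuous_on_poly_fun[OF h]]
      \<open>z \<in> S\<close> by blast
  then show ?thesis by (simp add: h_def)
qed

end

theorem mainTheorem1:
  fixes T FD FN :: "'d::finite stpt set set"
    and tn tn1 nu alpha :: real and k :: nat
    and u ub w wb :: "'d stpt set \<Rightarrow> 'd stpt \<Rightarrow> real^'d"
    and p pb :: "'d stpt set \<Rightarrow> 'd stpt \<Rightarrow> real"
    and f g um :: "'d stpt \<Rightarrow> real^'d"
  assumes "CARD('d) = 2 \<or> CARD('d) = 3"
    and "st_mesh T tn tn1"
    and "FD \<inter> FN = {}" and "FD \<union> FN = FB T"
    and "nu > 0" and "alpha > 0" and "k \<ge> 1"
    and "Vstar k T FD w wb"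
    and "Vstar k T FD u ub" and "Qstar k T p pb"
    and "\<forall>v vb q qb. Vstar k T FD v vb \<longrightarrow> Qstar k T q qb \<longrightarrow>
           t_form T FN u ub w wb v vb + a_form T nu alpha u ub v vb + b_form T p pb v vb
             - b_form T q qb u ub = rhs_form T FN f g um v vb"
  shows "(\<forall>K\<in>T. \<forall>z\<in>K. sdiv (u K) z = 0) \<and>
         (\<forall>S\<in>FI T. \<forall>K1\<in>cells_of T S. \<forall>K2\<in>cells_of T S. K1 \<noteq> K2 \<longrightarrow>
             (\<forall>z\<in>S. u K1 z \<bullet> nx K1 S + u K2 z \<bullet> nx K2 S = 0)) \<and>
         (\<forall>S\<in>FB T. \<forall>K\<in>cells_of T S. \<forall>z\<in>S. u K z \<bullet> nx K S = ub S z \<bullet> nx K S)"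
proof -
  have b_orth: "b_form T q qb u ub = 0" if "Qstar k T q qb" for q qb
    using b_form_eq_0_if_solution[OF assms(11) that] .
  show ?thesis
  proof (intro conjI ballI impI)
    show "sdiv (u K) z = 0" if "K \<in> T" "z \<in> K" for K z
      using sdiv_eq_0_on_cells[OF assms(2,9) b_orth that] .
    show "u K1 z \<bullet> nx K1 S + u K2 z \<bullet> nx K2 S = 0"
      if "S \<in> FI T" "K1 \<in> cells_of T S" "K2 \<in> cells_of T S" "K1 \<noteq> K2" "z \<in> S" for S K1 K2 z
      using normal_jump_on_interior_facets[OF assms(2,9) b_orth that] .
    show "u K z \<bullet> nx K S = ub S z \<bullet> nx K S" if "S \<in> FB T" "K \<in> cells_of T S" "z \<in> S" for S K z
      using normal_trace_on_boundary_facets[OF assms(2,9) b_orth that] .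
  qed
qed

end
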